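(* Let $(G,M,I)$ be a finite formal context and, for each $k\ge0$, let $\mathcal F_k$ be the cosheaf on $D(G,M,I)$ with $\mathcal F_k(\sigma)=C_k(\Delta[\sigma'])$ and extension maps induced by the inclusions $\tau'\subseteq\sigma'$ for $\sigma\subseteq\tau$. The simplicial boundary maps $C_k(\Delta[\sigma'])\to C_{k-1}(\Delta[\sigma'])$ commute with the extension maps and hence induce maps $H_0(\mathcal F_k)\to H_0(\mathcal F_{k-1})$ on zeroth cellular cosheaf homology. The resulting chain complex $(H_0(\mathcal F_k))_{k\ge0}$ is isomorphic to the real simplicial chain complex $C^\Delta(D(M,G,I^T))$ of the dual Dowker complex.
   Context: A formal context is a triple $(G,M,I)$ with $I\subseteq G\times M$; for $A\subseteq G$, $A'=\{m: gIm\ \forall g\in A\}$, for $B\subseteq M$, $B'=\{g: gIm\ \forall m\in B\}$. The Dowker complex $D(G,M,I)$ is the abstract simplicial complex on $G$ whose simplices are the nonempty $\sigma\subseteq G$ with $\sigma'\ne\emptyset$; dually $D(M,G,I^T)$ is the abstract simplicial complex on $M$ whose simplices are the nonempty $S\subseteq M$ with $S'\neq\emptyset$. $C^\Delta$ and $C_k$ denote real (oriented) simplicial chains, with orientations from fixed linear orders on $G$ and $M$; $\Delta[S]$ is the full simplex on $S$. For a cosheaf $\mathcal F$ of real vector spaces on $D(G,M,I)$, cellular cosheaf homology is the homology of $C_j=\bigoplus_{\dim\tau=j}\mathcal F(\tau)$ with $\partial_j x=\sum_{i=0}^{j}(-1)^i\mathcal F(\tau_i\subseteq\tau)(x)$ for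 $x\in\mathcal F(\tau)$, $\tau=\{g_0<\dots<g_j\}$, $\tau_i=\tau\setminus\{g_i\}$; in particular $H_0(\mathcal F)=C_0/\partial_1(C_1)$. *)

theory Defs
  imports Complex_Main
begin

definition attrs :: "'m set \<Rightarrow> ('g \<times> 'm) set \<Rightarrow> 'g set \<Rightarrow> 'm set" where
  "attrs M I A = {m \<in> M. \<forall>g\<in>A. (g, m) \<in> I}"

definition objs :: "'g set \<Rightarrow> ('g \<times> 'm) set \<Rightarrow> 'm set \<Rightarrow> 'g set" where
  "objs G I B = {g \<in> G. \<forall>m\<in>B. (g, m) \<in> I}"

definition dowker_simplex :: "'g set \<Rightarrow> 'm set \<Rightarrow> ('g \<times> 'm) set \<Rightarrow> 'g set \<Rightarrow> bool" where
  "dowker_simplex G M I \<sigma> \<longleftrightarrow> \<sigma> \<noteq> {} \<and> \<sigma> \<subseteq> G \<and> attrs M I \<sigma> \<noteq> {}"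

definition dual_simplex :: "'g set \<Rightarrow> 'm set \<Rightarrow> ('g \<times> 'm) set \<Rightarrow> 'm set \<Rightarrow> bool" where
  "dual_simplex G M I S \<longleftrightarrow> S \<noteq> {} \<and> S \<subseteq> M \<and> objs G I S \<noteq> {}"

text \<open>Real oriented k-chains of the full simplex on S: a chain is a function on
(k+1)-element subsets T of S (the simplex with vertices of T in increasing order).\<close>
definition simp_chains :: "nat \<Rightarrow> 'm set \<Rightarrow> ('m set \<Rightarrow> real) set" where
  "simp_chains k S = {c. \<forall>T. c T \<noteq> 0 \<longrightarrow> T \<subseteq> S \<and> card T = Suc k}"

text \<open>Simplicial boundary: for T = tau minus {m}, where m is the i-th vertex (from 0)
of tau = insert m T, the sign is (-1)^i with i = number of elements of T below m.\<close>
definition bd_simp :: "'m::linorder set \<Rightarrow> ('m set \<Rightarrow> real) \<Rightarrow> ('m set \<Rightarrow> real)" where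
  "bd_simp M c = (\<lambda>T. \<Sum>m\<in>M - T. (-1) ^ card {y\<in>T. y < m} * c (insert m T))"

definition dual_chains :: "'g set \<Rightarrow> 'm set \<Rightarrow> ('g \<times> 'm) set \<Rightarrow> nat \<Rightarrow> ('m set \<Rightarrow> real) set" where
  "dual_chains G M I k = {c. \<forall>T. c T \<noteq> 0 \<longrightarrow> dual_simplex G M I T \<and> card T = Suc k}"

text \<open>Cellular chains C_j of the cosheaf F_k, F_k(sigma) = C_k(Delta[sigma']):
an element is a family x sigma, nonzero only on j-simplices sigma of D(G,M,I),
with x sigma in C_k(Delta[sigma']).\<close>
definition cosheaf_chains :: "'g set \<Rightarrow> 'm set \<Rightarrow> ('g \<times> 'm) set \<Rightarrow> nat \<Rightarrow> nat
    \<Rightarrow> ('g set \<Rightarrow> 'm set \<Rightarrow> real) set" where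
  "cosheaf_chains G M I k j = {x. \<forall>\<sigma>.
      (x \<sigma> \<noteq> (\<lambda>_. 0) \<longrightarrow> dowker_simplex G M I \<sigma> \<and> card \<sigma> = Suc j) \<and>
      x \<sigma> \<in> simp_chains k (attrs M I \<sigma>)}"

text \<open>Cellular cosheaf boundary. The extension maps F_k(sigma_i \<subseteq> tau) are the
inclusions C_k(Delta[tau']) \<subseteq> C_k(Delta[sigma_i']), i.e. the identity on chain functions.\<close>
definition cosheaf_bd :: "'g::linorder set \<Rightarrow> ('g set \<Rightarrow> 'm set \<Rightarrow> real) \<Rightarrow> ('g set \<Rightarrow> 'm set \<Rightarrow> real)" where
  "cosheaf_bd G x = (\<lambda>\<sigma> S. \<Sum>g\<in>G - \<sigma>. (-1) ^ card {y\<in>\<sigma>. y < g} * x (insert g \<sigma>) S)"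

definition cosheaf_B1 :: "'g::linorder set \<Rightarrow> 'm set \<Rightarrow> ('g \<times> 'm) set \<Rightarrow> nat
    \<Rightarrow> ('g set \<Rightarrow> 'm set \<Rightarrow> real) set" where
  "cosheaf_B1 G M I k = cosheaf_bd G ` cosheaf_chains G M I k 1"

definition H0_class :: "'g::linorder set \<Rightarrow> 'm set \<Rightarrow> ('g \<times> 'm) set \<Rightarrow> nat
    \<Rightarrow> ('g set \<Rightarrow> 'm set \<Rightarrow> real) \<Rightarrow> ('g set \<Rightarrow> 'm set \<Rightarrow> real) set" where
  "H0_class G M I k x = {y \<in> cosheaf_chains G M I k 0.
      (\<lambda>\<sigma> S. x \<sigma> S - y \<sigma> S) \<in> cosheaf_B1 G M I k}"

definition H0 :: "'g::linorder set \<Rightarrow> 'm set \<Rightarrow> ('g \<times> 'm) set \<Rightarrow> nat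
    \<Rightarrow> ('g set \<Rightarrow> 'm set \<Rightarrow> real) set set" where
  "H0 G M I k = H0_class G M I k ` cosheaf_chains G M I k 0"

definition sum_bd :: "'m::linorder set \<Rightarrow> ('g set \<Rightarrow> 'm set \<Rightarrow> real) \<Rightarrow> ('g set \<Rightarrow> 'm set \<Rightarrow> real)" where
  "sum_bd M x = (\<lambda>\<sigma>. bd_simp M (x \<sigma>))"

end

theory Submission
  imports Defs
begin

text \<open>Summing a 0-chain of \<open>\<F>\<^sub>k\<close> over the vertices \<open>{g}\<close> gives a k-chain of \<open>D(M,G,I\<^sup>T)\<close>,
since \<open>{g}\<close> carries chains on \<open>T\<close> only if \<open>g \<in> T'\<close>; conversely every k-chain lifts by placing
its value at \<open>T\<close> on the least object of \<open>T'\<close>. This augmentation kills boundaries, because an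
edge \<open>{g, g'}\<close> contributes with opposite signs to its two vertices, and a 0-chain with
vanishing vertex sums is the boundary of its cone over the least object of \<open>T'\<close>. Hence the
augmentation induces a linear bijection \<open>H\<^sub>0(\<F>\<^sub>k) \<cong> C\<^sub>k(D(M,G,I\<^sup>T))\<close>, and it commutes with
the simplicial boundary since the two act on different arguments of a chain.\<close>

definition vertex_sum :: "'g set \<Rightarrow> ('g set \<Rightarrow> 'm set \<Rightarrow> real) \<Rightarrow> 'm set \<Rightarrow> real" where
  "vertex_sum G x = (\<lambda>T. \<Sum>g\<in>G. x {g} T)"

definition cone_chain :: "'g::linorder set \<Rightarrow> ('g \<times> 'm) set \<Rightarrow> ('g set \<Rightarrow> 'm set \<Rightarrow> real)
    \<Rightarrow> 'g set \<Rightarrow> 'm set \<Rightarrow> real" where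
  "cone_chain G I x = (\<lambda>\<sigma> T.
     if \<sigma> \<subseteq> objs G I T \<and> card \<sigma> = 2 \<and> Min (objs G I T) \<in> \<sigma> then x {Max \<sigma>} T else 0)"

definition min_object_chain :: "'g::linorder set \<Rightarrow> ('g \<times> 'm) set \<Rightarrow> ('m set \<Rightarrow> real)
    \<Rightarrow> 'g set \<Rightarrow> 'm set \<Rightarrow> real" where
  "min_object_chain G I c = (\<lambda>\<sigma> T.
     if objs G I T \<noteq> {} \<and> \<sigma> = {Min (objs G I T)} then c T else 0)"

definition H0_to_dual :: "'g set \<Rightarrow> ('g set \<Rightarrow> 'm set \<Rightarrow> real) set \<Rightarrow> 'm set \<Rightarrow> real" where
  "H0_to_dual G C = vertex_sum G (SOME x. x \<in> C)"

lemma card_singleton_less: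
  fixes a b :: "'a::linorder"
  shows "card {z\<in>{a}. z < b} = (if a < b then 1 else 0)"
proof -
  have "{z\<in>{a}. z < b} = (if a < b then {a} else {})" by auto
  then show ?thesis by simp
qed

lemma cosheaf_chains_lincomb:
  assumes "x \<in> cosheaf_chains G M I k j" "y \<in> cosheaf_chains G M I k j"
  shows "(\<lambda>\<sigma> S. a * x \<sigma> S + b * y \<sigma> S) \<in> cosheaf_chains G M I k j"
proof -
  have "(\<lambda>S. a * x \<sigma> S + b * y \<sigma> S) \<noteq> (\<lambda>_. 0) \<Longrightarrow> x \<sigma> \<noteq> (\<lambda>_. 0) \<or> y \<sigma> \<noteq> (\<lambda>_. 0)" for \<sigma>
    by auto
  moreover have "a * x \<sigma> T + b * y \<sigma> T \<noteq> 0 \<Longrightarrow> x \<sigma> T \<noteq> 0 \<or> y \<sigma> T \<noteq> 0" for \<sigma> T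
    by auto
  ultimately show ?thesis
    using assms unfolding cosheaf_chains_def simp_chains_def by (smt (verit) mem_Collect_eq)
qed

lemma cosheaf_chains_0_nonzeroD:
  assumes "x \<in> cosheaf_chains G M I k 0" "x \<sigma> T \<noteq> 0"
  obtains g where "\<sigma> = {g}" "g \<in> objs G I T" "T \<subseteq> M" "card T = Suc k"
proof -
  have "x \<sigma> \<noteq> (\<lambda>_. 0)" using assms(2) by auto
  then have \<sigma>: "dowker_simplex G M I \<sigma>" "card \<sigma> = 1"
    using assms(1) unfolding cosheaf_chains_def by auto
  then obtain g where g: "\<sigma> = {g}" using card_1_singletonE by blast
  have "T \<subseteq> attrs M I {g}" "card T = Suc k"
    using assms g unfolding cosheaf_chains_def simp_chains_def by auto
  moreover have "g \<in> G" using \<sigma> g unfolding dowker_simplex_def by auto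
  ultimately show ?thesis using that g unfolding attrs_def objs_def by auto
qed

lemma sum_bd_cosheaf_chains:
  assumes "x \<in> cosheaf_chains G M I (Suc k) j"
  shows "sum_bd M x \<in> cosheaf_chains G M I k j"
  unfolding cosheaf_chains_def
proof (intro CollectI allI conjI)
  fix \<sigma>
  show "sum_bd M x \<sigma> \<noteq> (\<lambda>_. 0) \<longrightarrow> dowker_simplex G M I \<sigma> \<and> card \<sigma> = Suc j"
  proof
    assume "sum_bd M x \<sigma> \<noteq> (\<lambda>_. 0)"
    then have "x \<sigma> \<noteq> (\<lambda>_. 0)" by (auto simp: sum_bd_def bd_simp_def)
    then show "dowker_simplex G M I \<sigma> \<and> card \<sigma> = Suc j"
      using assms unfolding cosheaf_chains_def by blast
  qed
  show "sum_bd M x \<sigma> \<in> simp_chains k (attrs M I \<sigma>)"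
    unfolding simp_chains_def
  proof (intro CollectI allI impI)
    fix T assume "sum_bd M x \<sigma> T \<noteq> 0"
    then obtain m where m: "m \<in> M - T" "x \<sigma> (insert m T) \<noteq> 0"
      unfolding sum_bd_def bd_simp_def by (metis (no_types, lifting) mult_zero_right sum.neutral)
    then have mT: "insert m T \<subseteq> attrs M I \<sigma>" "card (insert m T) = Suc (Suc k)"
      using assms unfolding cosheaf_chains_def simp_chains_def by blast+
    then have "finite (insert m T)" by (metis card.infinite nat.distinct(1))
    then show "T \<subseteq> attrs M I \<sigma> \<and> card T = Suc k" using m mT by auto
  qed
qed

lemma sum_bd_cosheaf_bd: "sum_bd M (cosheaf_bd G x) = cosheaf_bd G (sum_bd M x)"
  unfolding sum_bd_def bd_simp_def cosheaf_bd_def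
  by (intro ext) (simp add: sum_distrib_left mult.left_commute sum.swap[of _ "M - _"])

lemma sum_bd_cosheaf_B1:
  assumes "x \<in> cosheaf_B1 G M I (Suc k)"
  shows "sum_bd M x \<in> cosheaf_B1 G M I k"
proof -
  from assms obtain w where w: "w \<in> cosheaf_chains G M I (Suc k) 1" "x = cosheaf_bd G w"
    unfolding cosheaf_B1_def by blast
  then have "sum_bd M x = cosheaf_bd G (sum_bd M w)" by (simp add: sum_bd_cosheaf_bd)
  then show ?thesis
    unfolding cosheaf_B1_def using sum_bd_cosheaf_chains[OF w(1)] by (rule image_eqI)
qed

lemma vertex_sum_sum_bd: "vertex_sum G (sum_bd M x) = bd_simp M (vertex_sum G x)"
  unfolding vertex_sum_def sum_bd_def bd_simp_def
  by (intro ext) (simp add: sum_distrib_left sum.swap[of _ G])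

lemma cosheaf_bd_nonsingleton:
  assumes "y \<in> cosheaf_chains G M I k 1" "\<nexists>g. \<sigma> = {g}"
  shows "cosheaf_bd G y \<sigma> = (\<lambda>_. 0)"
proof -
  have "y (insert g \<sigma>) = (\<lambda>_. 0)" if "g \<notin> \<sigma>" for g
  proof (rule ccontr)
    assume "y (insert g \<sigma>) \<noteq> (\<lambda>_. 0)"
    then have card2: "card (insert g \<sigma>) = 2"
      using assms(1) unfolding cosheaf_chains_def by auto
    then have "finite (insert g \<sigma>)" by (metis card.infinite zero_neq_numeral)
    then have "card \<sigma> = 1" using card2 that by simp
    then show False using assms(2) card_1_singletonE by blast
  qed
  then show ?thesis unfolding cosheaf_bd_def by (intro ext sum.neutral) simp
qed

lemma cosheaf_bd_cosheaf_chains: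
  assumes "y \<in> cosheaf_chains G M I k 1"
  shows "cosheaf_bd G y \<in> cosheaf_chains G M I k 0"
  unfolding cosheaf_chains_def
proof (intro CollectI allI)
  fix \<sigma>
  show "(cosheaf_bd G y \<sigma> \<noteq> (\<lambda>_. 0) \<longrightarrow> dowker_simplex G M I \<sigma> \<and> card \<sigma> = Suc 0)
     \<and> cosheaf_bd G y \<sigma> \<in> simp_chains k (attrs M I \<sigma>)"
  proof (cases "\<exists>g. \<sigma> = {g}")
    case True
    then obtain g where g: "\<sigma> = {g}" by blast
    have edge: "g \<in> G \<and> T \<subseteq> attrs M I \<sigma> \<and> card T = Suc k \<and> T \<noteq> {}"
      if "y (insert g' \<sigma>) T \<noteq> 0" for g' T
    proof -
      have "dowker_simplex G M I (insert g' \<sigma>)" "T \<subseteq> attrs M I (insert g' \<sigma>)" "card T = Suc k"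
        using assms that unfolding cosheaf_chains_def simp_chains_def by fastforce+
      moreover have "attrs M I (insert g' \<sigma>) \<subseteq> attrs M I \<sigma>" unfolding attrs_def by auto
      ultimately show ?thesis using g unfolding dowker_simplex_def by auto
    qed
    have nonzero: "\<exists>g'. y (insert g' \<sigma>) T \<noteq> 0" if "cosheaf_bd G y \<sigma> T \<noteq> 0" for T
      using that unfolding cosheaf_bd_def by (metis (mono_tags, lifting) mult_zero_right sum.neutral)
    have "dowker_simplex G M I \<sigma> \<and> card \<sigma> = Suc 0" if ne: "cosheaf_bd G y \<sigma> \<noteq> (\<lambda>_. 0)"
    proof -
      obtain T g' where "y (insert g' \<sigma>) T \<noteq> 0" using ne nonzero by fast
      with edge have "g \<in> G" "T \<subseteq> attrs M I \<sigma>" "T \<noteq> {}" by auto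
      then show ?thesis using g unfolding dowker_simplex_def by auto
    qed
    moreover have "cosheaf_bd G y \<sigma> \<in> simp_chains k (attrs M I \<sigma>)"
      unfolding simp_chains_def using nonzero edge by blast
    ultimately show ?thesis by blast
  next
    case False
    then show ?thesis
      using cosheaf_bd_nonsingleton[OF assms] unfolding simp_chains_def by simp
  qed
qed

lemma cosheaf_bd_singleton:
  "cosheaf_bd G y {g} T = (\<Sum>g'\<in>G - {g}. (-1) ^ card {z\<in>{g}. z < g'} * y {g, g'} T)"
  unfolding cosheaf_bd_def by (intro sum.cong) (auto simp: insert_commute)

lemma vertex_sum_cosheaf_bd:
  fixes G :: "'g::linorder set"
  assumes "finite G"
  shows "vertex_sum G (cosheaf_bd G y) = (\<lambda>_. 0)"
proof
  fix T
  define F where "F g g' = (if g = g' then 0 else (-1::real) ^ card {z\<in>{g}. z < g'} * y {g, g'} T)"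
    for g g'
  have row: "cosheaf_bd G y {g} T = (\<Sum>g'\<in>G. F g g')" for g
  proof -
    have "(\<Sum>g'\<in>G. F g g') = (\<Sum>g'\<in>G - {g}. F g g')"
      by (rule sum.mono_neutral_right) (auto simp: assms F_def)
    also have "\<dots> = cosheaf_bd G y {g} T"
      unfolding cosheaf_bd_singleton F_def by (intro sum.cong) auto
    finally show ?thesis by simp
  qed
  have antisym: "F g' g = - F g g'" for g g'
  proof (cases "g = g'")
    case False
    have "y {g', g} T = y {g, g'} T" by (simp add: insert_commute)
    moreover have "g < g' \<and> \<not> g' < g \<or> g' < g \<and> \<not> g < g'" using False by auto
    ultimately show ?thesis using False unfolding F_def card_singleton_less by auto
  qed (simp add: F_def)
  have "(\<Sum>g\<in>G. \<Sum>g'\<in>G. F g g') = (\<Sum>g'\<in>G. \<Sum>g\<in>G. F g g')"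
    by (rule sum.swap)
  also have "\<dots> = (\<Sum>g'\<in>G. \<Sum>g\<in>G. - F g' g)"
    by (intro sum.cong refl) (rule antisym)
  also have "\<dots> = - (\<Sum>g\<in>G. \<Sum>g'\<in>G. F g g')" by (simp add: sum_negf)
  finally show "vertex_sum G (cosheaf_bd G y) T = 0"
    unfolding vertex_sum_def by (simp add: row)
qed

lemma cone_chain_edge:
  assumes "g \<noteq> g'"
  shows "cone_chain G I x {g, g'} T =
    (if {g, g'} \<subseteq> objs G I T \<and> Min (objs G I T) \<in> {g, g'} then x {max g g'} T else 0)"
  using assms unfolding cone_chain_def by auto

lemma cone_chain_cosheaf_chains:
  assumes "x \<in> cosheaf_chains G M I k 0"
  shows "cone_chain G I x \<in> cosheaf_chains G M I k 1"
proof -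
  have support: "\<sigma> \<subseteq> G \<and> card \<sigma> = 2 \<and> T \<subseteq> attrs M I \<sigma> \<and> T \<noteq> {} \<and> card T = Suc k"
    if "cone_chain G I x \<sigma> T \<noteq> 0" for \<sigma> T
  proof -
    have \<sigma>: "\<sigma> \<subseteq> objs G I T" "card \<sigma> = 2" "x {Max \<sigma>} T \<noteq> 0"
      using that unfolding cone_chain_def by (auto split: if_splits)
    have "T \<subseteq> M" "card T = Suc k"
      using cosheaf_chains_0_nonzeroD[OF assms \<sigma>(3)] by blast+
    with \<sigma> show ?thesis unfolding objs_def attrs_def by auto
  qed
  show ?thesis
    unfolding cosheaf_chains_def
  proof (intro CollectI allI conjI)
    fix \<sigma>
    show "cone_chain G I x \<sigma> \<noteq> (\<lambda>_. 0) \<longrightarrow> dowker_simplex G M I \<sigma> \<and> card \<sigma> = Suc 1"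
    proof
      assume "cone_chain G I x \<sigma> \<noteq> (\<lambda>_. 0)"
      then obtain T where "cone_chain G I x \<sigma> T \<noteq> 0" by auto
      with support show "dowker_simplex G M I \<sigma> \<and> card \<sigma> = Suc 1"
        unfolding dowker_simplex_def by fastforce
    qed
    show "cone_chain G I x \<sigma> \<in> simp_chains k (attrs M I \<sigma>)"
      unfolding simp_chains_def using support by blast
  qed
qed

lemma cosheaf_bd_cone_chain_apex:
  fixes G :: "'g::linorder set"
  assumes fin: "finite G" and x: "x \<in> cosheaf_chains G M I k 0"
    and ker: "vertex_sum G x = (\<lambda>_. 0)"
    and g: "g \<in> objs G I T" "g = Min (objs G I T)"
  shows "cosheaf_bd G (cone_chain G I x) {g} T = x {g} T"
proof -
  have finO: "finite (objs G I T)" using fin unfolding objs_def by auto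
  have "(-1) ^ card {z\<in>{g}. z < g'} * cone_chain G I x {g, g'} T = - x {g'} T"
    if g': "g' \<in> G - {g}" for g'
  proof (cases "g' \<in> objs G I T")
    case True
    then have "g < g'" using g g' finO by (metis Diff_iff Min_le insertI1 order_le_less)
    then have "card {z\<in>{g}. z < g'} = 1" unfolding card_singleton_less by simp
    then show ?thesis
      using g True \<open>g < g'\<close> cone_chain_edge[of g g' G I x T] by simp
  next
    case False
    then have "x {g'} T = 0" using cosheaf_chains_0_nonzeroD[OF x] by blast
    moreover have "cone_chain G I x {g, g'} T = 0"
      using False g' cone_chain_edge[of g g' G I x T] by auto
    ultimately show ?thesis by simp
  qed
  then have "cosheaf_bd G (cone_chain G I x) {g} T = - (\<Sum>g'\<in>G - {g}. x {g'} T)"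
    unfolding cosheaf_bd_singleton by (simp add: sum_negf)
  also have "\<dots> = x {g} T"
  proof -
    have "g \<in> G" using g unfolding objs_def by blast
    then have "(\<Sum>g'\<in>G. x {g'} T) = x {g} T + (\<Sum>g'\<in>G - {g}. x {g'} T)"
      using fin by (simp add: sum.remove)
    then show ?thesis using ker unfolding vertex_sum_def by (simp add: fun_eq_iff)
  qed
  finally show ?thesis .
qed

lemma cosheaf_bd_cone_chain_vertex:
  fixes G :: "'g::linorder set"
  assumes fin: "finite G" and x: "x \<in> cosheaf_chains G M I k 0"
    and ker: "vertex_sum G x = (\<lambda>_. 0)"
  shows "cosheaf_bd G (cone_chain G I x) {g} T = x {g} T"
proof -
  define g0 where "g0 = Min (objs G I T)"
  have finO: "finite (objs G I T)" using fin unfolding objs_def by auto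
  consider "g \<notin> objs G I T" | "g \<in> objs G I T" "g = g0" | "g \<in> objs G I T" "g0 < g"
    using finO g0_def by (metis Min_le order_le_less)
  then show ?thesis
  proof cases
    case 1
    then have "x {g} T = 0" using cosheaf_chains_0_nonzeroD[OF x] by blast
    moreover have "cone_chain G I x {g, g'} T = 0" if "g' \<in> G - {g}" for g'
      using 1 that cone_chain_edge[of g g' G I x T] by auto
    ultimately show ?thesis unfolding cosheaf_bd_singleton by simp
  next
    case 2
    then show ?thesis using cosheaf_bd_cone_chain_apex[OF fin x ker] g0_def by blast
  next
    case 3
    then have g0: "g0 \<in> objs G I T" "g0 \<in> G - {g}"
      using finO g0_def Min_in unfolding objs_def by auto
    have "(-1) ^ card {z\<in>{g}. z < g'} * cone_chain G I x {g, g'} T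
        = (if g' = g0 then x {g} T else 0)" if "g' \<in> G - {g}" for g'
      using 3 that g0 cone_chain_edge[of g g' G I x T] g0_def
      unfolding card_singleton_less by (auto simp: max_def)
    then show ?thesis unfolding cosheaf_bd_singleton using fin g0 by simp
  qed
qed

lemma cosheaf_bd_cone_chain:
  fixes G :: "'g::linorder set"
  assumes "finite G" and x: "x \<in> cosheaf_chains G M I k 0"
    and "vertex_sum G x = (\<lambda>_. 0)"
  shows "cosheaf_bd G (cone_chain G I x) = x"
proof (intro ext)
  fix \<sigma> T
  show "cosheaf_bd G (cone_chain G I x) \<sigma> T = x \<sigma> T"
  proof (cases "\<exists>g. \<sigma> = {g}")
    case True
    then show ?thesis using cosheaf_bd_cone_chain_vertex[OF assms] by blast
  next
    case False
    then have "x \<sigma> T = 0" using cosheaf_chains_0_nonzeroD[OF x] by metis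
    then show ?thesis
      using cosheaf_bd_nonsingleton[OF cone_chain_cosheaf_chains[OF x] False] by simp
  qed
qed

lemma cosheaf_B1_eq_vertex_sum_kernel:
  fixes G :: "'g::linorder set"
  assumes "finite G"
  shows "cosheaf_B1 G M I k = {x \<in> cosheaf_chains G M I k 0. vertex_sum G x = (\<lambda>_. 0)}"
proof
  show "cosheaf_B1 G M I k \<subseteq> {x \<in> cosheaf_chains G M I k 0. vertex_sum G x = (\<lambda>_. 0)}"
    unfolding cosheaf_B1_def
    using cosheaf_bd_cosheaf_chains vertex_sum_cosheaf_bd[OF assms] by blast
next
  show "{x \<in> cosheaf_chains G M I k 0. vertex_sum G x = (\<lambda>_. 0)} \<subseteq> cosheaf_B1 G M I k"
  proof clarify
    fix x assume x: "x \<in> cosheaf_chains G M I k 0" and ker: "vertex_sum G x = (\<lambda>_. 0)"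
    show "x \<in> cosheaf_B1 G M I k"
      unfolding cosheaf_B1_def
      using cosheaf_bd_cone_chain[OF assms x ker] cone_chain_cosheaf_chains[OF x]
      by (metis image_eqI)
  qed
qed

lemma H0_class_eq_vertex_sum_fibre:
  fixes G :: "'g::linorder set"
  assumes "finite G" and x: "x \<in> cosheaf_chains G M I k 0"
  shows "H0_class G M I k x = {y \<in> cosheaf_chains G M I k 0. vertex_sum G y = vertex_sum G x}"
proof -
  have "(\<lambda>\<sigma> S. x \<sigma> S - y \<sigma> S) \<in> cosheaf_B1 G M I k \<longleftrightarrow> vertex_sum G y = vertex_sum G x"
    if y: "y \<in> cosheaf_chains G M I k 0" for y
  proof -
    have "(\<lambda>\<sigma> S. 1 * x \<sigma> S + (-1) * y \<sigma> S) \<in> cosheaf_chains G M I k 0"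
      using cosheaf_chains_lincomb[OF x y] .
    moreover have "vertex_sum G (\<lambda>\<sigma> S. x \<sigma> S - y \<sigma> S) = (\<lambda>T. vertex_sum G x T - vertex_sum G y T)"
      unfolding vertex_sum_def by (simp add: sum_subtractf)
    ultimately show ?thesis
      unfolding cosheaf_B1_eq_vertex_sum_kernel[OF assms(1)] by (auto simp: fun_eq_iff)
  qed
  then show ?thesis unfolding H0_class_def by blast
qed

lemma H0_to_dual_H0_class:
  fixes G :: "'g::linorder set"
  assumes "finite G" and "x \<in> cosheaf_chains G M I k 0"
  shows "H0_to_dual G (H0_class G M I k x) = vertex_sum G x"
proof -
  have "x \<in> H0_class G M I k x" using H0_class_eq_vertex_sum_fibre[OF assms] assms(2) by blast
  then have "(SOME y. y \<in> H0_class G M I k x) \<in> H0_class G M I k x"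
    by (rule someI[where P = "\<lambda>y. y \<in> H0_class G M I k x"])
  then show ?thesis
    unfolding H0_to_dual_def using H0_class_eq_vertex_sum_fibre[OF assms] by blast
qed

lemma vertex_sum_dual_chains:
  assumes x: "x \<in> cosheaf_chains G M I k 0"
  shows "vertex_sum G x \<in> dual_chains G M I k"
  unfolding dual_chains_def
proof (intro CollectI allI impI)
  fix T assume "vertex_sum G x T \<noteq> 0"
  then obtain g where "x {g} T \<noteq> 0"
    unfolding vertex_sum_def by (metis (mono_tags, lifting) sum.neutral)
  then obtain h where "h \<in> objs G I T" "T \<subseteq> M" "card T = Suc k"
    using cosheaf_chains_0_nonzeroD[OF x] by blast
  moreover from \<open>card T = Suc k\<close> have "T \<noteq> {}" by auto
  ultimately show "dual_simplex G M I T \<and> card T = Suc k"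
    unfolding dual_simplex_def by blast
qed

lemma min_object_chain_cosheaf_chains:
  fixes G :: "'g::linorder set"
  assumes fin: "finite G" and c: "c \<in> dual_chains G M I k"
  shows "min_object_chain G I c \<in> cosheaf_chains G M I k 0"
proof -
  have support: "(\<exists>g\<in>G. \<sigma> = {g}) \<and> T \<subseteq> attrs M I \<sigma> \<and> T \<noteq> {} \<and> card T = Suc k"
    if "min_object_chain G I c \<sigma> T \<noteq> 0" for \<sigma> T
  proof -
    have "objs G I T \<noteq> {}" and \<sigma>: "\<sigma> = {Min (objs G I T)}" and "c T \<noteq> 0"
      using that unfolding min_object_chain_def by (auto split: if_splits)
    moreover have "finite (objs G I T)" using fin unfolding objs_def by auto
    ultimately have "Min (objs G I T) \<in> objs G I T" "dual_simplex G M I T" "card T = Suc k"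
      using c unfolding dual_chains_def by auto
    then show ?thesis
      unfolding \<sigma> by (auto simp: objs_def attrs_def dual_simplex_def)
  qed
  show ?thesis
    unfolding cosheaf_chains_def simp_chains_def
  proof (intro CollectI allI conjI)
    fix \<sigma>
    show "min_object_chain G I c \<sigma> \<noteq> (\<lambda>_. 0) \<longrightarrow> dowker_simplex G M I \<sigma> \<and> card \<sigma> = Suc 0"
    proof
      assume "min_object_chain G I c \<sigma> \<noteq> (\<lambda>_. 0)"
      then obtain T where "min_object_chain G I c \<sigma> T \<noteq> 0" by auto
      with support show "dowker_simplex G M I \<sigma> \<and> card \<sigma> = Suc 0"
        unfolding dowker_simplex_def by fastforce
    qed
  next
    fix \<sigma> T
    show "min_object_chain G I c \<sigma> T \<noteq> 0 \<longrightarrow> T \<subseteq> attrs M I \<sigma> \<and> card T = Suc k"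
      using support by blast
  qed
qed

lemma vertex_sum_min_object_chain:
  fixes G :: "'g::linorder set"
  assumes fin: "finite G" and c: "c \<in> dual_chains G M I k"
  shows "vertex_sum G (min_object_chain G I c) = c"
proof
  fix T
  show "vertex_sum G (min_object_chain G I c) T = c T"
  proof (cases "objs G I T = {}")
    case True
    then have "c T = 0" using c unfolding dual_chains_def dual_simplex_def by blast
    then show ?thesis using True unfolding min_object_chain_def vertex_sum_def by simp
  next
    case False
    moreover have "finite (objs G I T)" using fin unfolding objs_def by auto
    ultimately have "Min (objs G I T) \<in> G" using Min_in unfolding objs_def by blast
    then show ?thesis using False fin unfolding min_object_chain_def vertex_sum_def by simp
  qed
qed

lemma vertex_sum_image_cosheaf_chains_0:
  fixes G :: "'g::linorder set"
  assumes "finite G"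
  shows "vertex_sum G ` cosheaf_chains G M I k 0 = dual_chains G M I k"
proof
  show "vertex_sum G ` cosheaf_chains G M I k 0 \<subseteq> dual_chains G M I k"
    using vertex_sum_dual_chains by blast
  show "dual_chains G M I k \<subseteq> vertex_sum G ` cosheaf_chains G M I k 0"
    using vertex_sum_min_object_chain[OF assms] min_object_chain_cosheaf_chains[OF assms]
    by (metis image_eqI subsetI)
qed

lemma bij_betw_H0_to_dual:
  fixes G :: "'g::linorder set"
  assumes "finite G"
  shows "bij_betw (H0_to_dual G) (H0 G M I k) (dual_chains G M I k)"
  unfolding bij_betw_def
proof
  show "inj_on (H0_to_dual G) (H0 G M I k)"
  proof (rule inj_onI)
    fix A B assume "A \<in> H0 G M I k" "B \<in> H0 G M I k" and eq: "H0_to_dual G A = H0_to_dual G B"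
    then obtain x y where x: "x \<in> cosheaf_chains G M I k 0" "A = H0_class G M I k x"
      and y: "y \<in> cosheaf_chains G M I k 0" "B = H0_class G M I k y"
      unfolding H0_def by blast
    then have "vertex_sum G x = vertex_sum G y"
      using eq H0_to_dual_H0_class[OF assms] by metis
    then show "A = B"
      unfolding x(2) y(2) H0_class_eq_vertex_sum_fibre[OF assms x(1)]
        H0_class_eq_vertex_sum_fibre[OF assms y(1)] by simp
  qed
  have "H0_to_dual G ` H0 G M I k = vertex_sum G ` cosheaf_chains G M I k 0"
    unfolding H0_def image_image by (rule image_cong) (simp_all add: H0_to_dual_H0_class[OF assms])
  then show "H0_to_dual G ` H0 G M I k = dual_chains G M I k"
    using vertex_sum_image_cosheaf_chains_0[OF assms] by simp
qed

lemma H0_to_dual_add: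
  fixes G :: "'g::linorder set"
  assumes "finite G" "x \<in> cosheaf_chains G M I k 0" "y \<in> cosheaf_chains G M I k 0"
  shows "H0_to_dual G (H0_class G M I k (\<lambda>\<sigma> S. x \<sigma> S + y \<sigma> S))
    = (\<lambda>T. H0_to_dual G (H0_class G M I k x) T + H0_to_dual G (H0_class G M I k y) T)"
proof -
  have "(\<lambda>\<sigma> S. 1 * x \<sigma> S + 1 * y \<sigma> S) \<in> cosheaf_chains G M I k 0"
    using cosheaf_chains_lincomb[OF assms(2,3)] .
  then show ?thesis
    using assms by (simp add: H0_to_dual_H0_class vertex_sum_def sum.distrib)
qed

lemma H0_to_dual_scale:
  fixes G :: "'g::linorder set"
  assumes "finite G" "x \<in> cosheaf_chains G M I k 0"
  shows "H0_to_dual G (H0_class G M I k (\<lambda>\<sigma> S. a * x \<sigma> S))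
    = (\<lambda>T. a * H0_to_dual G (H0_class G M I k x) T)"
proof -
  have "(\<lambda>\<sigma> S. a * x \<sigma> S + 0 * x \<sigma> S) \<in> cosheaf_chains G M I k 0"
    using cosheaf_chains_lincomb[OF assms(2,2)] .
  then show ?thesis
    using assms by (simp add: H0_to_dual_H0_class vertex_sum_def sum_distrib_left)
qed

lemma H0_to_dual_sum_bd:
  fixes G :: "'g::linorder set"
  assumes "finite G" "x \<in> cosheaf_chains G M I (Suc k) 0"
  shows "H0_to_dual G (H0_class G M I k (sum_bd M x))
    = bd_simp M (H0_to_dual G (H0_class G M I (Suc k) x))"
  using assms sum_bd_cosheaf_chains[OF assms(2)]
  by (simp add: H0_to_dual_H0_class vertex_sum_sum_bd)

theorem mainTheorem6:
  fixes G :: "'g::linorder set" and M :: "'m::linorder set" and I :: "('g \<times> 'm) set"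
  assumes "finite G" and "finite M" and "I \<subseteq> G \<times> M"
  shows "(\<forall>k. \<forall>x\<in>cosheaf_chains G M I (Suc k) 0. sum_bd M x \<in> cosheaf_chains G M I k 0)
    \<and> (\<forall>k. \<forall>x\<in>cosheaf_chains G M I (Suc k) 1.
          sum_bd M (cosheaf_bd G x) = cosheaf_bd G (sum_bd M x)
          \<and> sum_bd M x \<in> cosheaf_chains G M I k 1)
    \<and> (\<forall>k. \<forall>x\<in>cosheaf_B1 G M I (Suc k). sum_bd M x \<in> cosheaf_B1 G M I k)
    \<and> (\<exists>\<phi>. \<forall>k.
          bij_betw (\<phi> k) (H0 G M I k) (dual_chains G M I k)
        \<and> (\<forall>x\<in>cosheaf_chains G M I k 0. \<forall>y\<in>cosheaf_chains G M I k 0.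
             \<phi> k (H0_class G M I k (\<lambda>\<sigma> S. x \<sigma> S + y \<sigma> S))
               = (\<lambda>T. \<phi> k (H0_class G M I k x) T + \<phi> k (H0_class G M I k y) T))
        \<and> (\<forall>x\<in>cosheaf_chains G M I k 0. \<forall>a::real.
             \<phi> k (H0_class G M I k (\<lambda>\<sigma> S. a * x \<sigma> S))
               = (\<lambda>T. a * \<phi> k (H0_class G M I k x) T))
        \<and> (\<forall>x\<in>cosheaf_chains G M I (Suc k) 0.
             \<phi> k (H0_class G M I k (sum_bd M x))
               = bd_simp M (\<phi> (Suc k) (H0_class G M I (Suc k) x))))"
  using assms(1) sum_bd_cosheaf_chains sum_bd_cosheaf_bd sum_bd_cosheaf_B1
  by (intro conjI exI[where x = "\<lambda>_. H0_to_dual G"] allI ballI)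
    (simp_all add: bij_betw_H0_to_dual H0_to_dual_add H0_to_dual_scale H0_to_dual_sum_bd)

end
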